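(* Let $m \geq 1$ and let $P_m$ be the regular polygon with $2^{m+1}$ edges, centered at the origin, inscribed in the unit circle, with a vertex at $(0,1)$. Let $f_m:\mathbb{R}^2 \to \{-1,1\}$ be $f_m(x) = 1$ if $x$ is inside $P_m$ and $f_m(x) = -1$ otherwise. Suppose $g:\mathbb{R}^2 \to \mathbb{R}$ is a piecewise linear function whose domain is partitioned into convex regions (response regions) on each of which $g$ is affine, and such that the classifier $x \mapsto 1$ if $g(x) > 0$, $x \mapsto -1$ otherwise, equals $f_m$. Then the partition has at least $2^m$ response regions.
   Context: A response region of a piecewise linear function $g:\mathbb{R}^2\to\mathbb{R}$ is one of the convex regions (convex polygons) of a partition of the plane such that $g$ restricted to each region is an affine function. *)

theory Defs
  imports "HOL-Analysis.Analysis"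
begin

definition polygon_vertex :: "nat \<Rightarrow> nat \<Rightarrow> real \<times> real" where
  "polygon_vertex m k =
     (cos (pi / 2 + 2 * pi * real k / 2 ^ (m + 1)),
      sin (pi / 2 + 2 * pi * real k / 2 ^ (m + 1)))"

definition polygon :: "nat \<Rightarrow> (real \<times> real) set" where
  "polygon m = convex hull {polygon_vertex m k | k. k < 2 ^ (m + 1)}"

definition f_target :: "nat \<Rightarrow> real \<times> real \<Rightarrow> int" where
  "f_target m x = (if x \<in> polygon m then 1 else -1)"

definition classifier :: "(real \<times> real \<Rightarrow> real) \<Rightarrow> real \<times> real \<Rightarrow> int" where
  "classifier g x = (if g x > 0 then 1 else -1)"

definition affine_on :: "(real \<times> real \<Rightarrow> real) \<Rightarrow> (real \<times> real) set \<Rightarrow> bool" where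
  "affine_on g C \<longleftrightarrow> (\<exists>a b c. \<forall>x\<in>C. g x = a * fst x + b * snd x + c)"

definition response_partition :: "(real \<times> real \<Rightarrow> real) \<Rightarrow> (real \<times> real) set set \<Rightarrow> bool" where
  "response_partition g R \<longleftrightarrow>
     finite R \<and> \<Union>R = UNIV \<and> (\<forall>C\<in>R. C \<noteq> {} \<and> convex C \<and> affine_on g C) \<and>
     (\<forall>C\<in>R. \<forall>D\<in>R. C \<noteq> D \<longrightarrow> interior C \<inter> interior D = {})"

end

theory Submission
  imports Defs
begin

text \<open>Scale every other vertex of \<open>P\<^sub>m\<close> by \<open>t = 2 / (1 + cos (pi / 2^m)) > 1\<close>. This gives
\<open>2^m\<close> points outside \<open>P\<^sub>m\<close>, where \<open>g \<le> 0\<close>, such that the midpoint of any two of them lies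
in \<open>P\<^sub>m\<close>, where \<open>g > 0\<close>: the midpoint of \<open>t v\<^sub>2\<^sub>i\<close> and \<open>t v\<^sub>2\<^sub>j\<close> is
\<open>t cos (pi (i - j) / 2^m) v\<^sub>i\<^sub>+\<^sub>j\<close>. If two of these points lay in one response region,
convexity would put their midpoint in it too, and there \<open>g\<close>, being affine, would take the
average of two nonpositive values. Hence the \<open>2^m\<close> points lie in pairwise distinct regions.\<close>

lemma card_le_card_separating_cover:
  assumes "finite R" "w ` I \<subseteq> \<Union>R"
    and separated: "\<And>i j C. i \<in> I \<Longrightarrow> j \<in> I \<Longrightarrow> i \<noteq> j \<Longrightarrow> C \<in> R \<Longrightarrow>
      w i \<in> C \<Longrightarrow> w j \<in> C \<Longrightarrow> False"
  shows "card I \<le> card R"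
proof -
  define region where "region i = (SOME C. C \<in> R \<and> w i \<in> C)" for i
  have region: "region i \<in> R \<and> w i \<in> region i" if "i \<in> I" for i
  proof -
    have "\<exists>C. C \<in> R \<and> w i \<in> C"
      using assms(2) that by blast
    then show ?thesis
      unfolding region_def by (rule someI_ex)
  qed
  have "inj_on region I"
  proof (rule inj_onI, rule ccontr)
    fix i j
    assume "i \<in> I" "j \<in> I" "region i = region j" "i \<noteq> j"
    then show False
      using separated[of i j "region i"] region by auto
  qed
  then show ?thesis
    by (rule card_inj_on_le) (use region assms(1) in auto)
qed

lemma affine_on_midpoint:
  assumes "convex C" "affine_on g C" "x \<in> C" "y \<in> C"
  shows "g (midpoint x y) = (g x + g y) / 2"
proof -
  obtain a b c where abc: "\<forall>z\<in>C. g z = a * fst z + b * snd z + c"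
    using assms(2) unfolding affine_on_def by blast
  have "midpoint x y \<in> C"
    using closed_segment_subset[OF assms(3,4,1)] midpoint_in_closed_segment by blast
  with abc assms(3,4) show ?thesis
    by (simp add: midpoint_def algebra_simps)
qed

lemma classifier_pos_iff:
  assumes "classifier g = f_target m"
  shows "g x > 0 \<longleftrightarrow> x \<in> polygon m"
  using fun_cong[OF assms, of x] by (auto simp: classifier_def f_target_def split: if_splits)

lemma abs_cos_le_cos_pi_div:
  fixes d n :: real
  assumes "0 < n" "1 \<le> \<bar>d\<bar>" "\<bar>d\<bar> \<le> n - 1"
  shows "\<bar>cos (pi * d / n)\<bar> \<le> cos (pi / n)"
proof -
  define x where "x = pi * \<bar>d\<bar> / n"
  have cos_x: "cos (pi * d / n) = cos x"
    unfolding x_def by (metis abs_divide abs_mult abs_of_pos assms(1) cos_abs_real pi_gt_zero)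
  have "pi * 1 / n \<le> x"
    unfolding x_def using assms by (intro divide_right_mono mult_left_mono) auto
  moreover have "x \<le> pi * (n - 1) / n"
    unfolding x_def using assms by (intro divide_right_mono mult_left_mono) auto
  moreover have "pi * (n - 1) / n = pi - pi / n"
    using assms(1) by (simp add: field_simps)
  moreover have "0 \<le> pi / n" using assms(1) by simp
  ultimately have "cos x \<le> cos (pi / n)" "cos (pi - x) \<le> cos (pi / n)"
    by (intro cos_monotone_0_pi_le; linarith)+
  then show ?thesis unfolding cos_x by simp
qed

lemma cos_pi_div_power2_bounds:
  assumes "1 \<le> m"
  shows "0 \<le> cos (pi / 2 ^ m)" "cos (pi / 2 ^ m) < 1"
proof -
  have "(2::real) \<le> 2 ^ m"
    using assms by (metis power_increasing power_one_right one_le_numeral)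
  then have "pi / 2 ^ m \<le> pi / 2"
    by (intro divide_left_mono) auto
  moreover have "0 \<le> pi / 2 ^ m"
    by simp
  ultimately show "0 \<le> cos (pi / 2 ^ m)"
    using pi_gt_zero by (intro cos_ge_zero) linarith+
  have "cos (pi / 2 ^ m) < cos 0"
    by (rule cos_monotone_0_pi) (auto simp: divide_le_eq)
  then show "cos (pi / 2 ^ m) < 1" by simp
qed

lemma polygon_vertex_eq:
  "polygon_vertex m k = (cos (pi / 2 + pi * real k / 2 ^ m), sin (pi / 2 + pi * real k / 2 ^ m))"
proof -
  have "2 * pi * real k / 2 ^ (m + 1) = pi * real k / 2 ^ m" by (simp add: field_simps)
  then show ?thesis unfolding polygon_vertex_def by simp
qed

lemma norm_polygon_vertex: "norm (polygon_vertex m k) = 1"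
  by (simp add: polygon_vertex_def norm_Pair)

lemma polygon_vertex_add_half_turn: "polygon_vertex m (k + 2 ^ m) = - polygon_vertex m k"
proof -
  define y where "y = pi / 2 + pi * real k / 2 ^ m"
  have "pi / 2 + pi * real (k + 2 ^ m) / 2 ^ m = y + pi"
    unfolding y_def by (simp add: field_simps)
  then show ?thesis unfolding polygon_vertex_eq y_def[symmetric] by simp
qed

lemma polygon_vertex_double_add:
  "polygon_vertex m (2 * i) + polygon_vertex m (2 * j)
     = (2 * cos (pi * (real i - real j) / 2 ^ m)) *\<^sub>R polygon_vertex m (i + j)"
proof -
  define a where "a = pi / 2 + pi * real (i + j) / 2 ^ m"
  define d where "d = pi * (real i - real j) / 2 ^ m"
  have angles: "pi / 2 + pi * real (2 * i) / 2 ^ m = a + d"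
    "pi / 2 + pi * real (2 * j) / 2 ^ m = a - d"
    unfolding a_def d_def by (simp_all add: field_simps)
  show ?thesis unfolding polygon_vertex_eq angles a_def[symmetric] d_def[symmetric]
    by (simp add: cos_add cos_diff sin_add sin_diff algebra_simps)
qed

lemma convex_polygon: "convex (polygon m)"
  unfolding polygon_def by (rule convex_convex_hull)

lemma polygon_subset_cball: "polygon m \<subseteq> cball 0 1"
  unfolding polygon_def by (rule hull_minimal) (auto simp: norm_polygon_vertex)

lemma polygon_vertex_in_polygon: "k < 2 ^ (m + 1) \<Longrightarrow> polygon_vertex m k \<in> polygon m"
  unfolding polygon_def by (rule hull_inc) blast

lemma uminus_polygon_vertex_in_polygon:
  assumes "k < 2 ^ (m + 1)"
  shows "- polygon_vertex m k \<in> polygon m"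
proof (cases "k < 2 ^ m")
  case True
  then show ?thesis
    using polygon_vertex_in_polygon[of "k + 2 ^ m" m] by (simp add: polygon_vertex_add_half_turn)
next
  case False
  then have "- polygon_vertex m k = polygon_vertex m (k - 2 ^ m)"
    using polygon_vertex_add_half_turn[of m "k - 2 ^ m"] by simp
  with assms show ?thesis by (simp add: polygon_vertex_in_polygon)
qed

lemma scaleR_polygon_vertex_in_polygon:
  assumes "k < 2 ^ (m + 1)" "\<bar>s\<bar> \<le> 1"
  shows "s *\<^sub>R polygon_vertex m k \<in> polygon m"
proof -
  have "((1 + s) / 2) *\<^sub>R polygon_vertex m k + ((1 - s) / 2) *\<^sub>R (- polygon_vertex m k)
      = ((1 + s) / 2 - (1 - s) / 2) *\<^sub>R polygon_vertex m k"
    by (simp add: scaleR_diff_left)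
  also have "(1 + s) / 2 - (1 - s) / 2 = s"
    by (simp add: field_simps)
  finally have "s *\<^sub>R polygon_vertex m k
      = ((1 + s) / 2) *\<^sub>R polygon_vertex m k + ((1 - s) / 2) *\<^sub>R (- polygon_vertex m k)" ..
  also have "\<dots> \<in> polygon m"
    using assms by (intro convexD convex_polygon uminus_polygon_vertex_in_polygon
        polygon_vertex_in_polygon) (auto simp: field_simps)
  finally show ?thesis .
qed

text \<open>Any scale factor in \<open>(1, 1 / cos (pi / 2^m)]\<close> would do.\<close>
definition outer_vertex :: "nat \<Rightarrow> nat \<Rightarrow> real \<times> real" where
  "outer_vertex m k = (2 / (1 + cos (pi / 2 ^ m))) *\<^sub>R polygon_vertex m (2 * k)"

lemma outer_vertex_notin_polygon:
  assumes "1 \<le> m"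
  shows "outer_vertex m k \<notin> polygon m"
proof -
  have "norm (outer_vertex m k) = 2 / (1 + cos (pi / 2 ^ m))"
    using cos_pi_div_power2_bounds[OF assms] by (simp add: outer_vertex_def norm_polygon_vertex)
  also have "\<dots> > 1"
    using cos_pi_div_power2_bounds[OF assms] by (simp add: field_simps)
  finally show ?thesis using polygon_subset_cball by fastforce
qed

lemma midpoint_outer_vertex_in_polygon:
  assumes "1 \<le> m" "i < 2 ^ m" "j < 2 ^ m" "i \<noteq> j"
  shows "midpoint (outer_vertex m i) (outer_vertex m j) \<in> polygon m"
proof -
  define c where "c = cos (pi / 2 ^ m)"
  define t where "t = 2 / (1 + c)"
  define s where "s = t * cos (pi * (real i - real j) / 2 ^ m)"
  have c: "0 \<le> c" "c < 1"
    unfolding c_def using cos_pi_div_power2_bounds[OF assms(1)] by auto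
  have "\<bar>real i - real j\<bar> \<le> 2 ^ m - 1"
    using assms(2,3) by (simp add: abs_le_iff nat_less_real_le)
  then have "\<bar>cos (pi * (real i - real j) / 2 ^ m)\<bar> \<le> c"
    unfolding c_def using assms(4) by (intro abs_cos_le_cos_pi_div) auto
  moreover have "0 < t"
    unfolding t_def using c by simp
  ultimately have "\<bar>s\<bar> \<le> t * c"
    unfolding s_def by (simp add: abs_mult)
  also have "t * c \<le> 1"
    unfolding t_def using c by (simp add: field_simps)
  finally have "s *\<^sub>R polygon_vertex m (i + j) \<in> polygon m"
    using assms(2,3) by (intro scaleR_polygon_vertex_in_polygon) auto
  moreover have "midpoint (outer_vertex m i) (outer_vertex m j) = s *\<^sub>R polygon_vertex m (i + j)"
    unfolding midpoint_def outer_vertex_def s_def t_def c_def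
    by (simp add: scaleR_add_right[symmetric] polygon_vertex_double_add)
  ultimately show ?thesis by simp
qed

theorem lemma2:
  fixes m :: nat and g :: "real \<times> real \<Rightarrow> real" and R :: "(real \<times> real) set set"
  assumes "m \<ge> 1"
    and "response_partition g R"
    and "classifier g = f_target m"
  shows "card R \<ge> 2 ^ m"
proof -
  have sign: "g x > 0 \<longleftrightarrow> x \<in> polygon m" for x
    using classifier_pos_iff[OF assms(3)] .
  have R: "finite R" "\<Union>R = UNIV" "\<And>C. C \<in> R \<Longrightarrow> convex C \<and> affine_on g C"
    using assms(2) unfolding response_partition_def by auto
  have "card {..<2 ^ m :: nat} \<le> card R"
  proof (rule card_le_card_separating_cover[where w = "outer_vertex m"])
    fix i j C
    assume ij: "i \<in> {..<2 ^ m}" "j \<in> {..<2 ^ m}" "i \<noteq> j"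
      and C: "C \<in> R" "outer_vertex m i \<in> C" "outer_vertex m j \<in> C"
    have "g (midpoint (outer_vertex m i) (outer_vertex m j))
            = (g (outer_vertex m i) + g (outer_vertex m j)) / 2"
      using R(3)[OF C(1)] C(2,3) by (intro affine_on_midpoint) auto
    moreover have "g (outer_vertex m i) \<le> 0" "g (outer_vertex m j) \<le> 0"
      using outer_vertex_notin_polygon[OF assms(1)] sign not_less by blast+
    moreover have "g (midpoint (outer_vertex m i) (outer_vertex m j)) > 0"
      using sign midpoint_outer_vertex_in_polygon[OF assms(1)] ij by auto
    ultimately show False by simp
  qed (use R in auto)
  then show ?thesis by simp
qed

end
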